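(* Let $P=\{\mathbf{x}^{(\mathrm{p})}_i\}_{i=1}^{n_{\mathrm p}}$ and $U=\{\mathbf{x}^{(\mathrm{u})}_i\}_{i=1}^{n_{\mathrm u}}$ be finite sets of points in $\mathbb{R}^d$, let $\pi\in(0,1)$, $w_{\mathrm p}=\pi/n_{\mathrm p}$ and $w_{\mathrm u}=1/n_{\mathrm u}$. Let $P'\subseteq P$ and $U'\subseteq U$, not both empty. For a loss $\ell:\mathbb{R}\times\{-1,+1\}\to\mathbb{R}$ define $$\hat R_{\mathrm{nnPU}}(v;P',U')=\sum_{\mathbf{x}\in P'}w_{\mathrm p}\,\ell(v,+1)+\max\Bigl\{0,\ \sum_{\mathbf{x}\in U'}w_{\mathrm u}\,\ell(v,-1)-\sum_{\mathbf{x}\in P'}w_{\mathrm p}\,\ell(v,-1)\Bigr\},$$ and $\hat R^*_{\mathrm{nnPU}}(P',U')=\inf_{v\in\mathbb{R}}\hat R_{\mathrm{nnPU}}(v;P',U')$. Let $W_{\mathrm p}=|P'|w_{\mathrm p}$, $W_{\mathrm n}=|U'|w_{\mathrm u}-|P'|w_{\mathrm p}$, and $v^*=\frac{W_{\mathrm p}}{W_{\mathrm p}+W_{\mathrm n}}$, where $v^*=+\infty$ if $W_{\mathrm p}+W_{\mathrm n}=0$. (a) For the quadratic loss $\ell(v,y)=(1-vy)^2$: $$\hat R^*_{\mathrm{nnPU}}(P',U')=\begin{cases}0,& v^*>1,\\ 4(W_{\mathrm p}+W_{\mathrm n})\,v^*(1-v^* ),&\text{otherwise.}\end{cases}$$ (b)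 For the logistic loss $\ell(v,y)=\ln(1+\exp(-vy))$: $$\hat R^*_{\mathrm{nnPU}}(P',U')=\begin{cases}(W_{\mathrm p}+W_{\mathrm n})\bigl(-v^*\ln v^*-(1-v^* )\ln(1-v^* )\bigr),& 0<v^*<1,\\ 0,&\text{otherwise.}\end{cases}$$
   Context: This is the non-negative PU (nnPU) risk estimate restricted to a decision-tree node containing positive examples $P'$ and unlabeled examples $U'$, when a constant score $v$ is predicted at that node. The value $v^*=+\infty$ counts as $v^*>1$. *)

theory Defs
  imports "HOL-Analysis.Analysis" "HOL-Library.Extended_Real"
begin

definition quad_loss :: "real \<Rightarrow> real \<Rightarrow> real" where
  "quad_loss v y = (1 - v * y)^2"

definition logistic_loss :: "real \<Rightarrow> real \<Rightarrow> real" where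
  "logistic_loss v y = ln (1 + exp (- v * y))"

definition w_p :: "real \<Rightarrow> 'a set \<Rightarrow> real" where
  "w_p \<pi> P = \<pi> / real (card P)"

definition w_u :: "'a set \<Rightarrow> real" where
  "w_u U = 1 / real (card U)"

definition nnPU_risk ::
  "(real \<Rightarrow> real \<Rightarrow> real) \<Rightarrow> real \<Rightarrow> 'a set \<Rightarrow> 'a set \<Rightarrow> 'a set \<Rightarrow> 'a set \<Rightarrow> real \<Rightarrow> real" where
  "nnPU_risk loss \<pi> P U P' U' v =
     (\<Sum>x\<in>P'. w_p \<pi> P * loss v 1)
     + max 0 ((\<Sum>x\<in>U'. w_u U * loss v (-1)) - (\<Sum>x\<in>P'. w_p \<pi> P * loss v (-1)))"

definition nnPU_opt ::
  "(real \<Rightarrow> real \<Rightarrow> real) \<Rightarrow> real \<Rightarrow> 'a set \<Rightarrow> 'a set \<Rightarrow> 'a set \<Rightarrow> 'a set \<Rightarrow> real" where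
  "nnPU_opt loss \<pi> P U P' U' = (INF v. nnPU_risk loss \<pi> P U P' U' v)"

definition W_pos :: "real \<Rightarrow> 'a set \<Rightarrow> 'a set \<Rightarrow> real" where
  "W_pos \<pi> P P' = real (card P') * w_p \<pi> P"

definition W_neg :: "real \<Rightarrow> 'a set \<Rightarrow> 'a set \<Rightarrow> 'a set \<Rightarrow> 'a set \<Rightarrow> real" where
  "W_neg \<pi> P U P' U' = real (card U') * w_u U - real (card P') * w_p \<pi> P"

definition v_star :: "real \<Rightarrow> 'a set \<Rightarrow> 'a set \<Rightarrow> 'a set \<Rightarrow> 'a set \<Rightarrow> ereal" where
  "v_star \<pi> P U P' U' =
     (let Wp = W_pos \<pi> P P'; Wn = W_neg \<pi> P U P' U'
      in if Wp + Wn = 0 then \<infinity> else ereal (Wp / (Wp + Wn)))"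

end

theory Submission
  imports Defs "HOL-Real_Asymp.Real_Asymp"
begin

(* Writing a = W_p and n = W_n, the risk is a l(v,1) + max 0 (n l(v,-1)). For n > 0 it equals
   (a + n) times the conditional risk p l(v,1) + (1 - p) l(v,-1) at p = a/(a+n) = v*, whose
   minimum is the Bayes risk: 4p(1-p) for the quadratic loss (complete the square) and the binary
   entropy of p for the logistic loss (Gibbs' inequality). For n <= 0, or for the logistic loss
   with a = 0, the risk is a multiple of a single loss term, which is driven to 0. *)

lemma cINF_eq_attained_lower_bound:
  fixes f :: "'a \<Rightarrow> 'b::conditionally_complete_lattice"
  assumes "\<And>x. m \<le> f x" and "f z = m"
  shows "(INF x. f x) = m"
  by (rule cInf_eq_minimum) (use assms in \<open>auto intro: image_eqI[of _ _ z]\<close>)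

lemma cINF_eq_limit_lower_bound:
  fixes f :: "'a \<Rightarrow> real"
  assumes lower: "\<And>x. m \<le> f x" and lim: "(f \<longlongrightarrow> m) F" and "F \<noteq> bot"
  shows "(INF x. f x) = m"
proof (rule antisym)
  have "bdd_below (range f)"
    using lower by (intro bdd_belowI[where m = m]) auto
  then have "\<forall>\<^sub>F x in F. (INF x. f x) \<le> f x"
    by (intro always_eventually) (simp add: cINF_lower)
  then show "(INF x. f x) \<le> m"
    using tendsto_lowerbound[OF lim _ \<open>F \<noteq> bot\<close>] by blast
  show "m \<le> (INF x. f x)"
    using lower by (rule cINF_greatest[rotated]) simp
qed

lemma nnPU_risk_eq_weights:
  "nnPU_risk loss \<pi> P U P' U' v =
     W_pos \<pi> P P' * loss v 1 + max 0 (W_neg \<pi> P U P' U' * loss v (-1))"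
  by (simp add: nnPU_risk_def W_pos_def W_neg_def algebra_simps)

lemma nnPU_INF_eq_scaled_Bayes_risk:
  fixes L :: "real \<Rightarrow> real \<Rightarrow> real"
  assumes "0 \<le> a" and "0 < n" and p: "p = a / (a + n)" and "\<And>v. 0 \<le> L v (-1)"
    and lower: "\<And>v. c \<le> p * L v 1 + (1 - p) * L v (-1)"
    and attained: "p * L z 1 + (1 - p) * L z (-1) = c"
  shows "(INF v. a * L v 1 + max 0 (n * L v (-1))) = (a + n) * c"
proof -
  have "0 < a + n"
    using assms by simp
  then have weights: "(a + n) * p = a" "(a + n) * (1 - p) = n"
    using p by (simp_all add: field_simps)
  have "(a + n) * (p * x + (1 - p) * y) = ((a + n) * p) * x + ((a + n) * (1 - p)) * y" for x y
    by (simp add: algebra_simps)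
  then have "a * L v 1 + max 0 (n * L v (-1)) = (a + n) * (p * L v 1 + (1 - p) * L v (-1))" for v
    using weights \<open>0 < n\<close> \<open>0 \<le> L v (-1)\<close> by simp
  with \<open>0 < a + n\<close> show ?thesis
    by (simp add: cINF_eq_attained_lower_bound[where z = z] lower attained mult_left_mono)
qed

lemma quad_loss_Bayes_decomposition:
  "p * quad_loss v 1 + (1 - p) * quad_loss v (-1) = (v - (2 * p - 1))^2 + 4 * p * (1 - p)"
  by (simp add: quad_loss_def power2_eq_square algebra_simps)

lemma quad_loss_nonneg: "0 \<le> quad_loss v y"
  by (simp add: quad_loss_def)

lemma quad_nnPU_INF:
  assumes "0 \<le> a"
  shows "(INF v. a * quad_loss v 1 + max 0 (n * quad_loss v (-1))) =
    (if n \<le> 0 then 0 else (a + n) * (4 * (a/(a+n)) * (1 - a/(a+n))))"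
proof (cases "n \<le> 0")
  case True
  have "max 0 (n * quad_loss v (-1)) = 0" for v
    using True by (simp add: quad_loss_def mult_nonpos_nonneg)
  then show ?thesis
    using True assms by (simp add: cINF_eq_attained_lower_bound[where z = 1] quad_loss_def)
next
  case False
  define p where "p = a / (a + n)"
  have "(INF v. a * quad_loss v 1 + max 0 (n * quad_loss v (-1))) = (a + n) * (4 * p * (1 - p))"
    by (rule nnPU_INF_eq_scaled_Bayes_risk[OF assms _ p_def, where z = "2 * p - 1"])
      (use False in \<open>simp_all add: quad_loss_Bayes_decomposition quad_loss_nonneg\<close>)
  then show ?thesis
    using False by (simp add: p_def)
qed

definition sigmoid :: "real \<Rightarrow> real" where
  "sigmoid v = 1 / (1 + exp (- v))"

lemma sigmoid_bounds: "0 < sigmoid v" "sigmoid v < 1"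
  by (simp_all add: sigmoid_def add_pos_pos)

lemma one_minus_sigmoid: "1 - sigmoid v = 1 / (1 + exp v)"
proof -
  have "0 < 1 + exp v"
    by (simp add: add_pos_pos)
  then show ?thesis
    by (simp add: sigmoid_def exp_minus field_simps)
qed

lemma sigmoid_logit:
  assumes "0 < p" and "p < 1"
  shows "sigmoid (ln (p / (1 - p))) = p"
  using assms by (simp add: sigmoid_def exp_minus field_simps)

lemma logistic_loss_pos_label: "logistic_loss v 1 = - ln (sigmoid v)"
  by (simp add: logistic_loss_def sigmoid_def ln_div add_pos_pos)

lemma logistic_loss_neg_label: "logistic_loss v (-1) = - ln (1 - sigmoid v)"
  by (simp add: logistic_loss_def one_minus_sigmoid ln_div add_pos_pos)

lemma logistic_loss_nonneg: "0 \<le> logistic_loss v y"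
  by (simp add: logistic_loss_def)

definition binary_entropy :: "real \<Rightarrow> real" where
  "binary_entropy p = - p * ln p - (1 - p) * ln (1 - p)"

lemma binary_entropy_le_cross_entropy:
  assumes p: "0 < p" "p < 1" and q: "0 < q" "q < 1"
  shows "binary_entropy p \<le> - p * ln q - (1 - p) * ln (1 - q)"
proof -
  have "p * (ln q - ln p) = p * ln (q / p)"
    using p q by (simp add: ln_div)
  also have "\<dots> \<le> p * (q / p - 1)"
    using p q by (intro mult_left_mono ln_le_minus_one) auto
  also have "\<dots> = q - p"
    using p by (simp add: field_simps)
  finally have "p * (ln q - ln p) \<le> q - p" .
  have "(1 - p) * (ln (1 - q) - ln (1 - p)) = (1 - p) * ln ((1 - q) / (1 - p))"
    using p q by (simp add: ln_div)
  also have "\<dots> \<le> (1 - p) * ((1 - q) / (1 - p) - 1)"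
    using p q by (intro mult_left_mono ln_le_minus_one) auto
  also have "\<dots> = p - q"
    using p by (simp add: field_simps)
  finally have "(1 - p) * (ln (1 - q) - ln (1 - p)) \<le> p - q" .
  show ?thesis
    using \<open>p * (ln q - ln p) \<le> q - p\<close> \<open>(1 - p) * (ln (1 - q) - ln (1 - p)) \<le> p - q\<close>
    unfolding binary_entropy_def by (simp add: algebra_simps)
qed

lemma logistic_nnPU_INF:
  assumes "0 \<le> a"
  shows "(INF v. a * logistic_loss v 1 + max 0 (n * logistic_loss v (-1))) =
    (if 0 < a \<and> 0 < n then (a + n) * binary_entropy (a/(a+n)) else 0)"
proof -
  consider "n \<le> 0" | "a = 0" "0 < n" | "0 < a" "0 < n"
    using assms by linarith
  then show ?thesis
  proof cases
    case 1
    then have "max 0 (n * logistic_loss v (-1)) = 0" for v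
      by (simp add: mult_nonpos_nonneg logistic_loss_nonneg)
    moreover have "((\<lambda>v. a * logistic_loss v 1) \<longlongrightarrow> 0) at_top"
      unfolding logistic_loss_def by real_asymp
    ultimately show ?thesis
      using 1 assms by (simp add: cINF_eq_limit_lower_bound logistic_loss_nonneg)
  next
    case 2
    have "((\<lambda>v. n * logistic_loss v (-1)) \<longlongrightarrow> 0) at_bot"
      unfolding logistic_loss_def by real_asymp
    then show ?thesis
      using 2 by (simp add: cINF_eq_limit_lower_bound logistic_loss_nonneg)
  next
    case 3
    define p where "p = a/(a+n)"
    have p: "0 < p" "p < 1"
      using 3 by (simp_all add: p_def)
    have lower: "binary_entropy p \<le> p * logistic_loss v 1 + (1 - p) * logistic_loss v (-1)" for v
      using binary_entropy_le_cross_entropy[OF p sigmoid_bounds[of v]]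
      by (simp add: logistic_loss_pos_label logistic_loss_neg_label)
    have attained: "p * logistic_loss (ln (p / (1 - p))) 1
        + (1 - p) * logistic_loss (ln (p / (1 - p))) (-1) = binary_entropy p"
      by (simp add: logistic_loss_pos_label logistic_loss_neg_label sigmoid_logit[OF p]
          binary_entropy_def)
    have "(INF v. a * logistic_loss v 1 + max 0 (n * logistic_loss v (-1))) =
        (a + n) * binary_entropy p"
      using 3 logistic_loss_nonneg
      by (intro nnPU_INF_eq_scaled_Bayes_risk[where L = logistic_loss, OF _ _ p_def _ lower attained])
        simp_all
    then show ?thesis
      using 3 by (simp add: p_def)
  qed
qed

theorem proposition2:
  fixes P U P' U' :: "(real ^ 'd) set" and \<pi> :: real
  assumes "finite P" and "finite U"
    and "0 < \<pi>" and "\<pi> < 1"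
    and "P' \<subseteq> P" and "U' \<subseteq> U"
    and "P' \<noteq> {} \<or> U' \<noteq> {}"
  defines "Wp \<equiv> W_pos \<pi> P P'"
    and "Wn \<equiv> W_neg \<pi> P U P' U'"
    and "vs \<equiv> v_star \<pi> P U P' U'"
  shows "(nnPU_opt quad_loss \<pi> P U P' U' =
           (if vs > 1 then 0
            else 4 * (Wp + Wn) * real_of_ereal vs * (1 - real_of_ereal vs)))
         \<and> (nnPU_opt logistic_loss \<pi> P U P' U' =
           (if 0 < vs \<and> vs < 1
            then (Wp + Wn) * (- real_of_ereal vs * ln (real_of_ereal vs)
                   - (1 - real_of_ereal vs) * ln (1 - real_of_ereal vs))
            else 0))"
proof -
  have Wp: "0 \<le> Wp"
    using \<open>0 < \<pi>\<close> by (simp add: Wp_def W_pos_def w_p_def)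
  have "0 \<le> Wp + Wn"
    by (simp add: Wp_def Wn_def W_pos_def W_neg_def w_u_def)
  then consider "Wp + Wn = 0" | "0 < Wp + Wn"
    by linarith
  moreover have "vs = (if Wp + Wn = 0 then \<infinity> else ereal (Wp / (Wp + Wn)))"
    by (simp add: vs_def v_star_def Wp_def Wn_def Let_def)
  moreover have "nnPU_opt loss \<pi> P U P' U' = (INF v. Wp * loss v 1 + max 0 (Wn * loss v (-1)))"
    for loss by (simp add: nnPU_opt_def nnPU_risk_eq_weights Wp_def Wn_def)
  ultimately show ?thesis
    using Wp by cases (auto simp: quad_nnPU_INF logistic_nnPU_INF binary_entropy_def field_simps)
qed

end
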